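(* Let $\kappa>0$, let $N\ge2$ be even, and let $X_N\in\mathbb R^{(N-1)\times(N-1)}$ be the matrix with entries $(X_N)_{ij}=a_{i\wedge j}\,a_{N-(i\vee j)}/a_N$ for $1\le i,j\le N-1$. Then for all $k\ge1$ and all $1\le i\le j\le N/2$: $$(X_N^k)_{N/2,N/2}\ge\frac{a_{N/2}^2\big\{\sum_{l=1}^{N-1}a_{l\wedge(N-l)}^2\big\}^{k-1}}{a_N^k},$$ $$(X_N^k)_{N/2,i}=(X_N^k)_{N/2,N-i},\qquad (X_N^k)_{N/2,i}\le(X_N^k)_{N/2,j},\qquad (X_N^k)_{N/2,i}\ge\frac{a_i}{a_{N/2}}(X_N^k)_{N/2,N/2}.$$
   Context: The sequence $\{a_i\}_{i\ge0}$ is defined by $a_0=0$, $a_1=1$ and $a_i=(2+\kappa^2/N^2)a_{i-1}-a_{i-2}$ for $i\ge2$. *)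

theory Defs
  imports Complex_Main
begin

fun aseq :: "real \<Rightarrow> nat \<Rightarrow> nat \<Rightarrow> real" where
  "aseq \<kappa> N 0 = 0"
| "aseq \<kappa> N (Suc 0) = 1"
| "aseq \<kappa> N (Suc (Suc i)) = (2 + \<kappa>^2 / (real N)^2) * aseq \<kappa> N (Suc i) - aseq \<kappa> N i"

text \<open>Entries of X_N, indexed by 1 <= i,j <= N-1 (values outside are irrelevant).\<close>
definition XN :: "real \<Rightarrow> nat \<Rightarrow> nat \<Rightarrow> nat \<Rightarrow> real" where
  "XN \<kappa> N i j = aseq \<kappa> N (min i j) * aseq \<kappa> N (N - max i j) / aseq \<kappa> N N"

fun matpow :: "nat \<Rightarrow> (nat \<Rightarrow> nat \<Rightarrow> real) \<Rightarrow> nat \<Rightarrow> nat \<Rightarrow> nat \<Rightarrow> real" where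
  "matpow n A 0 i j = (if i = j then 1 else 0)"
| "matpow n A (Suc k) i j = (\<Sum>l=1..n. matpow n A k i l * A l j)"

end

theory Submission
  imports Defs
begin

text \<open>
  Put \<open>c = 2 + \<kappa>\<^sup>2 / N\<^sup>2\<close>. Both \<open>j \<mapsto> a j\<close> and \<open>j \<mapsto> a (N - j)\<close> solve
  \<open>c u j - u (j - 1) - u (j + 1) = 0\<close>, and the Casoratian identity
  \<open>a (p + 1) a (q + 1) - a p a q = a (p + q + 1)\<close> yields a unit jump on the diagonal,
  so \<open>X\<^sub>N\<close> is the Green's function of this second difference operator with
  Dirichlet conditions at \<open>0\<close> and \<open>N\<close>. Hence the middle row of \<open>X\<^sub>N\<^sup>k\<^sup>+\<^sup>1\<close> solves
  the difference equation whose source is the middle row of \<open>X\<^sub>N\<^sup>k\<close>. It inherits the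
  symmetry \<open>l \<mapsto> N - l\<close> from the centrosymmetry of \<open>X\<^sub>N\<close>, and a discrete minimum
  principle for its increments carries monotonicity on \<open>[0, N/2]\<close> from one power to
  the next. The lower bound comes from the rank-one minorant
  \<open>X\<^sub>N l j \<ge> a (min l (N - l)) a (min j (N - j)) / a N\<close>, and the last inequality
  from \<open>X\<^sub>N l j / a j\<close> being nonincreasing in \<open>j\<close>.
\<close>

lemma mono_if_second_difference_source_mono:
  fixes w v :: "nat \<Rightarrow> real"
  assumes "c > 2" and "w 0 \<le> w 1" and reflect: "w (m + 1) = w (m - 1)"
    and eq: "\<And>j. j \<in> {1..m} \<Longrightarrow> c * w j - w (j - 1) - w (j + 1) = v j"
    and source_mono: "\<And>j. j \<in> {2..m} \<Longrightarrow> v (j - 1) \<le> v j"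
    and "i \<le> j" and "j \<le> m"
  shows "w i \<le> w j"
proof -
  define d where "d j = w j - w (j - 1)" for j
  have "0 \<le> d j" if "j \<in> {1..m}" for j
  proof -
    have "\<exists>j0. is_arg_min d (\<lambda>j. j \<in> {1..m}) j0"
      using that by (intro ex_is_arg_min_if_finite) auto
    then obtain j0 where j0: "j0 \<in> {1..m}" and least: "\<And>j. j \<in> {1..m} \<Longrightarrow> d j0 \<le> d j"
      unfolding is_arg_min_linorder by blast
    \<comment> \<open>At a negative minimal increment \<open>c d j0 - d (j0 - 1) - d (j0 + 1) \<le> (c - 2) d j0 < 0\<close>,
      while this second difference equals \<open>v j0 - v (j0 - 1) \<ge> 0\<close>.\<close>
    have "0 \<le> d j0"
    proof (rule ccontr)
      assume neg: "\<not> 0 \<le> d j0"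
      then have "j0 \<noteq> 1"
        using \<open>w 0 \<le> w 1\<close> by (auto simp: d_def)
      with j0 have "d j0 \<le> d (j0 - 1)"
        by (intro least) auto
      moreover have "d j0 \<le> d (j0 + 1)"
      proof (cases "j0 = m")
        case True
        then have "d (j0 + 1) = - d j0"
          using reflect by (simp add: d_def)
        then show ?thesis
          using neg by simp
      next
        case False
        with j0 show ?thesis
          by (intro least) auto
      qed
      moreover have "v (j0 - 1) \<le> v j0"
        using j0 \<open>j0 \<noteq> 1\<close> by (intro source_mono) auto
      moreover have "j0 - 1 \<in> {1..m}" and "j0 - 1 + 1 = j0"
        using j0 \<open>j0 \<noteq> 1\<close> by auto
      then have "c * d j0 - d (j0 - 1) - d (j0 + 1) = v j0 - v (j0 - 1)"
        using eq[OF j0] eq[of "j0 - 1"] by (simp add: d_def algebra_simps)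
      moreover have "(c - 2) * d j0 < 0"
        using \<open>c > 2\<close> neg by (simp add: mult_pos_neg)
      ultimately show False
        by (simp add: algebra_simps)
    qed
    then show ?thesis
      using least[OF that] by simp
  qed
  then have "w n \<le> w (Suc n)" if "n \<in> {0..<m}" for n
    using that by (force simp: d_def)
  then show ?thesis
    using lift_Suc_mono_le_ivl[of "{0..<m}" w i j] assms by auto
qed

lemma matpow_one:
  assumes "i \<in> {1..n}"
  shows "matpow n A 1 i j = A i j"
proof -
  have "matpow n A 1 i j = (\<Sum>l=1..n. if l = i then A l j else 0)"
    unfolding One_nat_def matpow.simps by (rule sum.cong) auto
  also have "\<dots> = A i j"
    using assms by simp
  finally show ?thesis .
qed

lemma matpow_nonneg: "(\<And>l j. 0 \<le> A l j) \<Longrightarrow> 0 \<le> matpow n A k i j"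
  by (induction k arbitrary: j) (simp_all add: sum_nonneg)

lemma matpow_Suc_second_difference:
  assumes "j \<in> {1..n}"
    and green: "\<And>l. l \<in> {1..n} \<Longrightarrow> c * A l j - A l (j - 1) - A l (j + 1) = (if l = j then 1 else 0)"
  shows "c * matpow n A (Suc k) i j - matpow n A (Suc k) i (j - 1) - matpow n A (Suc k) i (j + 1)
    = matpow n A k i j"
proof -
  have "c * matpow n A (Suc k) i j - matpow n A (Suc k) i (j - 1) - matpow n A (Suc k) i (j + 1)
      = (\<Sum>l=1..n. matpow n A k i l * (c * A l j - A l (j - 1) - A l (j + 1)))"
    by (simp add: sum_subtractf sum.distrib sum_distrib_left algebra_simps)
  also have "\<dots> = (\<Sum>l=1..n. if l = j then matpow n A k i l else 0)"
    using green by (intro sum.cong) auto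
  also have "\<dots> = matpow n A k i j"
    using assms(1) by simp
  finally show ?thesis .
qed

lemma matpow_reflect:
  assumes centro: "\<And>l j. l \<in> {1..n} \<Longrightarrow> j \<le> n + 1 \<Longrightarrow> A l (n + 1 - j) = A (n + 1 - l) j"
    and "2 * i = n + 1" and "j \<le> n + 1"
  shows "matpow n A k i (n + 1 - j) = matpow n A k i j"
  using assms(3)
proof (induction k arbitrary: j)
  case 0
  then show ?case
    using assms(2) by auto
next
  case (Suc k)
  have "matpow n A (Suc k) i (n + 1 - j) = (\<Sum>l=1..n. matpow n A k i l * A l (n + 1 - j))"
    by simp
  also have "\<dots> = (\<Sum>l=1..n. matpow n A k i (n + 1 - l) * A (n + 1 - l) j)"
  proof (rule sum.cong)
    fix l
    assume "l \<in> {1..n}"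
    then show "matpow n A k i l * A l (n + 1 - j) = matpow n A k i (n + 1 - l) * A (n + 1 - l) j"
      using centro[of l j] Suc.IH[of l] Suc.prems by simp
  qed simp
  also have "\<dots> = (\<Sum>l=1..n. matpow n A k i l * A l j)"
    using sum.atLeastAtMost_rev[of "\<lambda>l. matpow n A k i l * A l j" 1 n] by simp
  finally show ?case
    by simp
qed

lemma matpow_ge_rank_one:
  assumes "0 \<le> b" and "\<And>l. 0 \<le> u l"
    and lower: "\<And>l j. l \<in> {1..n} \<Longrightarrow> j \<in> {1..n} \<Longrightarrow> b * u l * u j \<le> A l j"
    and "i \<in> {1..n}" and "j \<in> {1..n}"
  shows "b ^ Suc k * u i * u j * (\<Sum>l=1..n. u l ^ 2) ^ k \<le> matpow n A (Suc k) i j"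
  using assms(5)
proof (induction k arbitrary: j)
  case 0
  have "matpow n A (Suc 0) i j = A i j"
    using matpow_one[OF assms(4)] by (simp only: One_nat_def)
  then show ?case
    using lower assms(4) 0 by simp
next
  case (Suc k)
  let ?S = "\<Sum>l=1..n. u l ^ 2"
  have "b ^ Suc (Suc k) * u i * u j * ?S ^ Suc k
      = (\<Sum>l=1..n. (b ^ Suc k * u i * u l * ?S ^ k) * (b * u l * u j))"
    by (simp add: sum_distrib_left sum_distrib_right power2_eq_square algebra_simps)
  also have "\<dots> \<le> (\<Sum>l=1..n. matpow n A (Suc k) i l * A l j)"
    by (intro sum_mono mult_mono' Suc.IH lower Suc.prems)
      (simp_all add: assms(1,2) sum_nonneg)
  also have "\<dots> = matpow n A (Suc (Suc k)) i j"
    by simp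
  finally show ?case .
qed

lemma matpow_Suc_column_le:
  assumes "\<And>l j. 0 \<le> A l j" and "\<And>l. l \<in> {1..n} \<Longrightarrow> s * A l j \<le> t * A l i"
  shows "s * matpow n A (Suc k) p j \<le> t * matpow n A (Suc k) p i"
proof -
  have "s * matpow n A (Suc k) p j = (\<Sum>l=1..n. matpow n A k p l * (s * A l j))"
    by (simp add: sum_distrib_left algebra_simps)
  also have "\<dots> \<le> (\<Sum>l=1..n. matpow n A k p l * (t * A l i))"
    by (intro sum_mono mult_left_mono) (simp_all add: assms matpow_nonneg)
  also have "\<dots> = t * matpow n A (Suc k) p i"
    by (simp add: sum_distrib_left algebra_simps)
  finally show ?thesis .
qed

lemma aseq_nonneg_less_Suc: "0 \<le> aseq \<kappa> N i \<and> aseq \<kappa> N i < aseq \<kappa> N (Suc i)"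
proof (induction i)
  case (Suc i)
  have "0 \<le> \<kappa>^2 / (real N)^2 * aseq \<kappa> N (Suc i)"
    using Suc.IH by simp
  then have "aseq \<kappa> N (Suc i) - aseq \<kappa> N i \<le> aseq \<kappa> N (Suc (Suc i)) - aseq \<kappa> N (Suc i)"
    by (simp add: algebra_simps)
  with Suc.IH show ?case by linarith
qed simp

lemma aseq_nonneg: "0 \<le> aseq \<kappa> N i"
  using aseq_nonneg_less_Suc by blast

lemma aseq_mono: "i \<le> j \<Longrightarrow> aseq \<kappa> N i \<le> aseq \<kappa> N j"
  by (rule lift_Suc_mono_le) (use aseq_nonneg_less_Suc less_imp_le in blast)

lemma aseq_pos: "1 \<le> i \<Longrightarrow> 0 < aseq \<kappa> N i"
  using aseq_mono[of 1 i \<kappa> N] by simp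

lemma aseq_three_term:
  "1 \<le> j \<Longrightarrow> aseq \<kappa> N (j - 1) + aseq \<kappa> N (j + 1) = (2 + \<kappa>^2 / (real N)^2) * aseq \<kappa> N j"
  by (cases j) auto

lemma aseq_casoratian:
  "aseq \<kappa> N (Suc p) * aseq \<kappa> N (Suc q) - aseq \<kappa> N p * aseq \<kappa> N q = aseq \<kappa> N (p + q + 1)"
proof (induction p arbitrary: q)
  case (Suc p)
  have "aseq \<kappa> N (Suc (Suc p)) * aseq \<kappa> N (Suc q) - aseq \<kappa> N (Suc p) * aseq \<kappa> N q
      = aseq \<kappa> N (Suc p) * aseq \<kappa> N (Suc (Suc q)) - aseq \<kappa> N p * aseq \<kappa> N (Suc q)"
    by (simp add: algebra_simps)
  also have "\<dots> = aseq \<kappa> N (Suc p + q + 1)"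
    using Suc.IH[of "Suc q"] by simp
  finally show ?case .
qed simp

lemma XN_green:
  assumes "l \<in> {1..N-1}" and "j \<in> {1..N-1}"
  shows "(2 + \<kappa>^2 / (real N)^2) * XN \<kappa> N l j - XN \<kappa> N l (j - 1) - XN \<kappa> N l (j + 1)
    = (if l = j then 1 else 0)"
proof -
  let ?a = "aseq \<kappa> N" and ?c = "2 + \<kappa>^2 / (real N)^2"
  have aN: "?a N \<noteq> 0"
    using aseq_pos[of N \<kappa> N] assms by (simp, linarith)
  have left: "XN \<kappa> N l j' = ?a j' * ?a (N - l) / ?a N" if "j' \<le> l" for j'
    using that by (simp add: XN_def)
  have right: "XN \<kappa> N l j' = ?a l * ?a (N - j') / ?a N" if "l \<le> j'" for j'
    using that by (simp add: XN_def)
  consider "j < l" | "l < j" | "j = l" by linarith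
  then show ?thesis
  proof cases
    case 1
    then have "?c * XN \<kappa> N l j - XN \<kappa> N l (j - 1) - XN \<kappa> N l (j + 1)
        = (?c * ?a j - (?a (j - 1) + ?a (j + 1))) * ?a (N - l) / ?a N"
      using aN by (simp add: left field_simps)
    also have "\<dots> = 0"
      using aseq_three_term[of j \<kappa> N] assms by simp
    finally show ?thesis
      using 1 by simp
  next
    case 2
    have shift: "N - (j - 1) = (N - j) + 1" "N - (j + 1) = (N - j) - 1"
      using assms by auto
    have "1 \<le> N - j"
      using assms by auto
    from aseq_three_term[of "N - j" \<kappa> N, OF this]
    have "?a (N - (j + 1)) + ?a (N - (j - 1)) = ?c * ?a (N - j)"
      unfolding shift by (simp add: add.commute)
    moreover from 2 have "?c * XN \<kappa> N l j - XN \<kappa> N l (j - 1) - XN \<kappa> N l (j + 1)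
        = (?c * ?a (N - j) - (?a (N - (j + 1)) + ?a (N - (j - 1)))) * ?a l / ?a N"
      using aN by (simp add: right field_simps)
    ultimately show ?thesis
      using 2 by simp
  next
    case 3
    have "Suc (N - l - 1) = N - l" "l + (N - l - 1) + 1 = N"
      using assms by auto
    with aseq_casoratian[of \<kappa> N l "N - l - 1"]
    have casoratian: "?a (l + 1) * ?a (N - l) - ?a l * ?a (N - l - 1) = ?a N"
      by simp
    have recurrence: "?c * ?a l - ?a (l - 1) = ?a (l + 1)"
      using aseq_three_term[of l \<kappa> N] assms by simp
    have "?c * XN \<kappa> N l l - XN \<kappa> N l (l - 1) - XN \<kappa> N l (l + 1)
        = (?c * (?a l * ?a (N - l)) - ?a (l - 1) * ?a (N - l) - ?a l * ?a (N - l - 1)) / ?a N"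
      by (simp add: left right diff_divide_distrib)
    also have "\<dots> = ((?c * ?a l - ?a (l - 1)) * ?a (N - l) - ?a l * ?a (N - l - 1)) / ?a N"
      by (simp add: algebra_simps)
    also have "\<dots> = 1"
      unfolding recurrence casoratian using aN by simp
    finally show ?thesis
      using 3 by simp
  qed
qed

lemma XN_nonneg: "0 \<le> XN \<kappa> N l j"
  unfolding XN_def by (simp add: aseq_nonneg)

lemma XN_reflect:
  assumes "l \<le> N" and "j \<le> N"
  shows "XN \<kappa> N l (N - j) = XN \<kappa> N (N - l) j"
proof -
  have "min l (N - j) = N - max (N - l) j" and "N - max l (N - j) = min (N - l) j"
    using assms by auto
  then show ?thesis
    unfolding XN_def by (simp add: mult.commute)
qed

lemma XN_ge_rank_one:
  assumes "l \<le> N" and "j \<le> N"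
  shows "aseq \<kappa> N (min l (N - l)) * aseq \<kappa> N (min j (N - j)) / aseq \<kappa> N N \<le> XN \<kappa> N l j"
proof -
  have "aseq \<kappa> N (min l (N - l)) * aseq \<kappa> N (min j (N - j))
      \<le> aseq \<kappa> N (min l j) * aseq \<kappa> N (N - max l j)"
  proof (cases "l \<le> j")
    case True
    then show ?thesis
      using assms by (intro mult_mono aseq_mono aseq_nonneg) auto
  next
    case False
    then show ?thesis
      using assms by (subst mult.commute) (intro mult_mono aseq_mono aseq_nonneg, auto)
  qed
  then show ?thesis
    unfolding XN_def by (simp add: divide_right_mono aseq_nonneg)
qed

lemma XN_column_ratio_antimono:
  assumes "1 \<le> i" and "i \<le> j"
  shows "XN \<kappa> N l j * aseq \<kappa> N i \<le> XN \<kappa> N l i * aseq \<kappa> N j"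
proof -
  have "aseq \<kappa> N (min l j) * aseq \<kappa> N i \<le> aseq \<kappa> N (min l i) * aseq \<kappa> N j"
  proof (cases "l \<le> i")
    case True
    then show ?thesis
      using assms by (simp add: min_absorb1 mult_left_mono aseq_mono aseq_nonneg)
  next
    case False
    then show ?thesis
      by (simp add: min_absorb2 mult.commute mult_left_mono aseq_mono aseq_nonneg)
  qed
  moreover have "aseq \<kappa> N (N - max l j) \<le> aseq \<kappa> N (N - max l i)"
    using assms by (intro aseq_mono) auto
  ultimately have "aseq \<kappa> N (min l j) * aseq \<kappa> N i * aseq \<kappa> N (N - max l j)
      \<le> aseq \<kappa> N (min l i) * aseq \<kappa> N j * aseq \<kappa> N (N - max l i)"
    by (rule mult_mono) (simp_all add: aseq_nonneg)
  then show ?thesis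
    unfolding XN_def by (simp add: divide_right_mono aseq_nonneg algebra_simps)
qed

lemma matpow_XN_middle_row_reflect:
  assumes "even N" and "N \<ge> 2" and "j \<le> N"
  shows "matpow (N - 1) (XN \<kappa> N) k (N div 2) (N - j) = matpow (N - 1) (XN \<kappa> N) k (N div 2) j"
proof -
  have "N - 1 + 1 = N" and "2 * (N div 2) = N"
    using assms by auto
  with matpow_reflect[of "N - 1" "XN \<kappa> N" "N div 2" j k] XN_reflect[of _ N _ \<kappa>] assms(3)
  show ?thesis
    by simp
qed

lemma matpow_XN_middle_row_mono:
  assumes "\<kappa> > 0" and "N \<ge> 2" and "even N" and "i \<le> j" and "j \<le> N div 2"
  shows "matpow (N - 1) (XN \<kappa> N) k (N div 2) i \<le> matpow (N - 1) (XN \<kappa> N) k (N div 2) j"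
  using assms(4,5)
proof (induction k arbitrary: i j)
  case 0
  then show ?case
    by auto
next
  case (Suc k)
  let ?m = "N div 2" and ?w = "matpow (N - 1) (XN \<kappa> N) (Suc k) (N div 2)"
  show ?case
  proof (rule mono_if_second_difference_source_mono[where c = "2 + \<kappa>^2 / (real N)^2"])
    show "2 < 2 + \<kappa>^2 / (real N)^2"
      using assms by simp
    have "?w 0 = 0"
      by (simp add: XN_def)
    moreover have "0 \<le> ?w 1"
      by (rule matpow_nonneg[OF XN_nonneg])
    ultimately show "?w 0 \<le> ?w 1"
      by linarith
    have "N - (?m - 1) = ?m + 1"
      using assms by auto
    then show "?w (?m + 1) = ?w (?m - 1)"
      using matpow_XN_middle_row_reflect[of N "?m - 1" \<kappa> "Suc k"] assms by simp
    show "(2 + \<kappa>^2 / (real N)^2) * ?w j' - ?w (j' - 1) - ?w (j' + 1)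
        = matpow (N - 1) (XN \<kappa> N) k ?m j'" if "j' \<in> {1..?m}" for j'
      using that assms by (intro matpow_Suc_second_difference XN_green) auto
  qed (use Suc in auto)
qed

lemma matpow_XN_middle_diag_ge:
  assumes "N \<ge> 2" and "even N"
  shows "aseq \<kappa> N (N div 2)^2 * (\<Sum>l=1..N-1. aseq \<kappa> N (min l (N - l))^2)^k / aseq \<kappa> N N ^ Suc k
    \<le> matpow (N - 1) (XN \<kappa> N) (Suc k) (N div 2) (N div 2)"
proof -
  let ?a = "aseq \<kappa> N" and ?m = "N div 2"
  let ?u = "\<lambda>l. ?a (min l (N - l))"
  have m: "?m \<in> {1..N - 1}" and "?u ?m = ?a ?m"
    using assms by auto
  have "1 / ?a N * ?u l * ?u j \<le> XN \<kappa> N l j" if "l \<in> {1..N - 1}" "j \<in> {1..N - 1}" for l j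
    using XN_ge_rank_one[of l N j \<kappa>] that by auto
  then have "(1 / ?a N) ^ Suc k * ?u ?m * ?u ?m * (\<Sum>l=1..N-1. ?u l ^ 2) ^ k
      \<le> matpow (N - 1) (XN \<kappa> N) (Suc k) ?m ?m"
    using m by (intro matpow_ge_rank_one) (simp_all add: aseq_nonneg)
  then show ?thesis
    using \<open>?u ?m = ?a ?m\<close> by (simp add: power_one_over power2_eq_square)
qed

lemma matpow_XN_middle_row_ge_ratio:
  assumes "1 \<le> i" and "i \<le> N div 2"
  shows "aseq \<kappa> N i * matpow (N - 1) (XN \<kappa> N) (Suc k) (N div 2) (N div 2)
    \<le> aseq \<kappa> N (N div 2) * matpow (N - 1) (XN \<kappa> N) (Suc k) (N div 2) i"
proof (intro matpow_Suc_column_le XN_nonneg)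
  show "aseq \<kappa> N i * XN \<kappa> N l (N div 2) \<le> aseq \<kappa> N (N div 2) * XN \<kappa> N l i" for l
    using XN_column_ratio_antimono[of i "N div 2" \<kappa> N l] assms by (simp add: mult.commute)
qed

theorem lemmaA3:
  fixes \<kappa> :: real and N k i j :: nat
  assumes "\<kappa> > 0" and "N \<ge> 2" and "even N"
    and "k \<ge> 1" and "1 \<le> i" and "i \<le> j" and "j \<le> N div 2"
  defines "a \<equiv> aseq \<kappa> N"
    and "P \<equiv> matpow (N - 1) (XN \<kappa> N) k"
  shows "P (N div 2) (N div 2) \<ge>
           a (N div 2)^2 * (\<Sum>l=1..N-1. a (min l (N - l))^2)^(k - 1) / a N ^ k
     \<and> P (N div 2) i = P (N div 2) (N - i)
     \<and> P (N div 2) i \<le> P (N div 2) j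
     \<and> P (N div 2) i \<ge> a i / a (N div 2) * P (N div 2) (N div 2)"
proof (intro conjI)
  let ?m = "N div 2"
  obtain k' where k: "k = Suc k'"
    using assms(4) by (cases k) auto
  show "a ?m^2 * (\<Sum>l=1..N-1. a (min l (N - l))^2)^(k - 1) / a N ^ k \<le> P ?m ?m"
    unfolding a_def P_def k using matpow_XN_middle_diag_ge assms by simp
  show "P ?m i = P ?m (N - i)"
    unfolding P_def using matpow_XN_middle_row_reflect assms by simp
  show "P ?m i \<le> P ?m j"
    unfolding P_def using matpow_XN_middle_row_mono assms by blast
  have "a i * P ?m ?m \<le> a ?m * P ?m i"
    unfolding a_def P_def k using matpow_XN_middle_row_ge_ratio assms by simp
  moreover have "0 < a ?m"
    unfolding a_def using aseq_pos assms by simp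
  ultimately show "a i / a ?m * P ?m ?m \<le> P ?m i"
    by (simp add: divide_simps mult.commute)
qed

end
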